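(* For every integer $d\ge 1$ there exist infinite families $\mathcal A$ and $\mathcal B$ of closed convex sets in $\mathbb R^d$ such that $\pi(\mathcal A)=\infty$, every member of $\mathcal B$ is bounded, and the family $\mathcal F=\mathcal A\cup\mathcal B$ satisfies the $(d+2k,d+k)$-property for every integer $k\ge 0$.
   Context: A family of at least $p$ sets satisfies the $(p,q)$-property if among any $p$ of its members there are $q$ with a common point. The piercing number $\pi(\mathcal A)$ is the minimum cardinality of a set of points meeting every member of $\mathcal A$, and $\pi(\mathcal A)=\infty$ if no finite such set exists. *)

theory Defs
  imports "HOL-Analysis.Analysis"
begin

definition pq_property :: "nat \<Rightarrow> nat \<Rightarrow> 'a set set \<Rightarrow> bool" where
  "pq_property p q F \<longleftrightarrow>
     (infinite F \<or> p \<le> card F) \<and>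
     (\<forall>S \<subseteq> F. finite S \<and> card S = p \<longrightarrow>
        (\<exists>T \<subseteq> S. card T = q \<and> \<Inter>T \<noteq> {}))"

text \<open>Piercing number: minimum cardinality of a finite point set meeting every member;
infinity if no finite such set exists (Inf of the empty set of enat is infinity).\<close>
definition piercing_number :: "'a set set \<Rightarrow> enat" where
  "piercing_number F =
     (INF P \<in> {P. finite P \<and> (\<forall>A\<in>F. A \<inter> P \<noteq> {})}. enat (card P))"

end

theory Submission
  imports Defs "HOL-Computational_Algebra.Fundamental_Theorem_Algebra"
begin

(* Enumerate the coordinates of R^d as x_0, ..., x_(d-1) and attach to a point x the
   polynomial P_x(t) = 1 + x_1 t + ... + x_(d-1) t^(d-1). Put
       A_m = { x. (m+1) |P_x(m+1)| \<le> x_0 }     and     B_n = closed ball of radius R + n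
   with R = d 2^d. Each A_m is closed and convex because P_x(t) is affine in x.
   (1) Any finitely many A_m meet: take x_0 large and all other coordinates zero.
   (2) Fewer than d of the A_m meet inside the ball of radius R: choose P_x as the product of
       the factors 1 - t/(m+1), whose coefficients are at most 2^d, and put x_0 = 0.
   (3) No point lies in infinitely many A_m, since t |P_x(t)| \<rightarrow> \<infinity>; so A cannot be pierced.
   A purely combinatorial lemma turns (1) and (2) into the (d+2k, d+k)-property, and
   (3) gives the infinite piercing number. *)


text \<open>If all finite subfamilies of the infinite family \<open>A\<close> intersect, and fewer than \<open>d\<close>
  members of \<open>A\<close> together with finitely many members of \<open>B\<close> always intersect, then
  \<open>A \<union> B\<close> has the \<open>(d + 2k, d + k)\<close>-property: among \<open>d + 2k\<close> sets either at least
  \<open>d + k\<close> come from \<open>A\<close>, or more than \<open>k\<close> come from \<open>B\<close> and \<open>d - 1\<close> from \<open>A\<close> fill up.\<close>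
lemma pq_property_from_intersections:
  fixes A B :: "'a set set" and d k :: nat
  assumes "infinite A" and "d \<ge> 1"
    and A_meets: "\<And>A'. A' \<subseteq> A \<Longrightarrow> finite A' \<Longrightarrow> \<Inter>A' \<noteq> {}"
    and AB_meets: "\<And>A' B'. A' \<subseteq> A \<Longrightarrow> finite A' \<Longrightarrow> card A' < d \<Longrightarrow>
                       B' \<subseteq> B \<Longrightarrow> finite B' \<Longrightarrow> \<Inter>(A' \<union> B') \<noteq> {}"
  shows "pq_property (d + 2 * k) (d + k) (A \<union> B)"
  unfolding pq_property_def
proof (intro conjI allI impI)
  show "infinite (A \<union> B) \<or> d + 2 * k \<le> card (A \<union> B)"
    using \<open>infinite A\<close> by auto
next
  fix S assume S: "S \<subseteq> A \<union> B" "finite S \<and> card S = d + 2 * k"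
  define SA SB where "SA = S \<inter> A" and "SB = S - A"
  have fin: "finite SA" "finite SB" and SB: "SB \<subseteq> B"
    using S by (auto simp: SA_def SB_def)
  have "SA \<union> SB = S" "SA \<inter> SB = {}" by (auto simp: SA_def SB_def)
  then have card_split: "card SA + card SB = d + 2 * k"
    using S card_Un_disjoint[OF fin] by simp
  show "\<exists>T\<subseteq>S. card T = d + k \<and> \<Inter>T \<noteq> {}"
  proof (cases "d + k \<le> card SA")
    case True
    then obtain T where T: "T \<subseteq> SA" "card T = d + k" "finite T"
      by (rule obtain_subset_with_card_n)
    then show ?thesis using A_meets[of T] by (auto simp: SA_def)
  next
    case False
    obtain TA where TA: "TA \<subseteq> SA" "card TA = min (card SA) (d - 1)" "finite TA"
      by (rule obtain_subset_with_card_n[of "min (card SA) (d - 1)" SA]) auto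
    have "TA \<inter> SB = {}" using TA(1) by (auto simp: SA_def SB_def)
    then have "d + k \<le> card (TA \<union> SB)"
      using card_Un_disjoint[OF TA(3) fin(2)] TA(2) card_split False \<open>d \<ge> 1\<close> by linarith
    then obtain T where T: "T \<subseteq> TA \<union> SB" "card T = d + k"
      by (rule obtain_subset_with_card_n)
    have "\<Inter>(TA \<union> SB) \<noteq> {}"
      using AB_meets[OF _ TA(3) _ SB fin(2)] TA(1,2) \<open>d \<ge> 1\<close> by (auto simp: SA_def)
    moreover have "\<Inter>(TA \<union> SB) \<subseteq> \<Inter>T" using T(1) by auto
    moreover have "T \<subseteq> S" using T(1) TA(1) by (auto simp: SA_def SB_def)
    ultimately show ?thesis using T(2) by blast
  qed
qed

lemma piercing_number_infinite:
  fixes F :: "nat \<Rightarrow> 'a set"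
  assumes "\<And>x. finite {m. x \<in> F m}"
  shows "piercing_number (range F) = \<infinity>"
proof -
  have "\<not> (\<forall>X\<in>range F. X \<inter> P \<noteq> {})" if "finite P" for P
  proof -
    have "finite (\<Union>x\<in>P. {m. x \<in> F m})" using that assms by blast
    then obtain m where "m \<notin> (\<Union>x\<in>P. {m. x \<in> F m})"
      using ex_new_if_finite[OF infinite_UNIV_nat] by blast
    then have "F m \<inter> P = {}" by blast
    then show ?thesis by blast
  qed
  then have no_piercing: "{P. finite P \<and> (\<forall>X\<in>range F. X \<inter> P \<noteq> {})} = {}" by blast
  show ?thesis
    unfolding piercing_number_def no_piercing image_empty Inf_empty top_enat_def ..
qed

text \<open>A finite product of linear factors \<open>1 + a t\<close> with \<open>|a| \<le> 1\<close> has all its coefficients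
  bounded by \<open>2\<close> to the number of factors; this makes the witnesses in step (2) uniformly
  bounded.\<close>
lemma coeff_prod_linear_factors_bound:
  fixes a :: "'b \<Rightarrow> real"
  assumes "finite S" and "\<And>s. s \<in> S \<Longrightarrow> \<bar>a s\<bar> \<le> 1"
  shows "\<bar>coeff (\<Prod>s\<in>S. [:1, a s:]) j\<bar> \<le> 2 ^ card S"
  using assms
proof (induction S arbitrary: j rule: finite_induct)
  case empty
  then show ?case by (simp add: coeff_1)
next
  case (insert s S)
  define q where "q = (\<Prod>s\<in>S. [:1, a s:])"
  have IH: "\<bar>coeff q i\<bar> \<le> 2 ^ card S" for i
    using insert by (simp add: q_def)
  have shifted: "\<bar>coeff (pCons 0 (smult (a s) q)) j\<bar> \<le> 2 ^ card S"
  proof (cases j)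
    case (Suc i)
    have "\<bar>a s * coeff q i\<bar> \<le> 1 * 2 ^ card S"
      unfolding abs_mult using insert.prems IH by (intro mult_mono) auto
    then show ?thesis using Suc by simp
  qed simp
  have "(\<Prod>s\<in>insert s S. [:1, a s:]) = q + pCons 0 (smult (a s) q)"
    using insert by (simp add: q_def)
  then have "\<bar>coeff (\<Prod>s\<in>insert s S. [:1, a s:]) j\<bar>
      \<le> \<bar>coeff q j\<bar> + \<bar>coeff (pCons 0 (smult (a s) q)) j\<bar>"
    by (simp add: abs_triangle_ineq)
  also have "\<dots> \<le> 2 ^ card (insert s S)"
    using IH[of j] shifted insert by simp
  finally show ?case .
qed


locale coordinate_enumeration =
  fixes h :: "nat \<Rightarrow> 'n::finite"
  assumes enum: "bij_betw h {..<CARD('n)} UNIV"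
begin

lemma h_eq_iff: "i < CARD('n) \<Longrightarrow> j < CARD('n) \<Longrightarrow> h i = h j \<longleftrightarrow> i = j"
  using enum unfolding bij_betw_def inj_on_def by blast

definition point_poly :: "real ^ 'n \<Rightarrow> real poly" where
  "point_poly x = 1 + (\<Sum>j\<in>{1..<CARD('n)}. monom (x $ h j) j)"

lemma coeff_point_poly:
  "coeff (point_poly x) j = (if j = 0 then 1 else if j < CARD('n) then x $ h j else 0)"
  by (auto simp: point_poly_def coeff_sum coeff_monom coeff_1)

lemma poly_point_poly: "poly (point_poly x) t = 1 + (\<Sum>j\<in>{1..<CARD('n)}. x $ h j * t ^ j)"
  by (simp add: point_poly_def poly_sum poly_monom)

definition A :: "nat \<Rightarrow> (real ^ 'n) set" where
  "A m = {x. real (Suc m) * \<bar>poly (point_poly x) (real (Suc m))\<bar> \<le> x $ h 0}"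

lemma A_closed: "closed (A m)"
  unfolding A_def poly_point_poly by (intro closed_Collect_le continuous_intros)

lemma poly_point_poly_affine:
  assumes "u + v = 1"
  shows "poly (point_poly (u *\<^sub>R x + v *\<^sub>R y)) t
       = u * poly (point_poly x) t + v * poly (point_poly y) t"
proof -
  have "u * 1 + v * 1 = 1" using assms by simp
  then show ?thesis
    unfolding poly_point_poly
    by (simp add: algebra_simps sum.distrib sum_distrib_left)
qed

lemma A_convex: "convex (A m)"
  unfolding convex_def
proof (intro ballI allI impI)
  fix x y :: "real ^ 'n" and u v :: real
  assume x: "x \<in> A m" and y: "y \<in> A m" and uv: "0 \<le> u" "0 \<le> v" "u + v = 1"
  define c where "c = real (Suc m)"
  have "c * \<bar>poly (point_poly (u *\<^sub>R x + v *\<^sub>R y)) c\<bar>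
      = c * \<bar>u * poly (point_poly x) c + v * poly (point_poly y) c\<bar>"
    by (simp add: poly_point_poly_affine[OF uv(3)])
  also have "\<dots> \<le> c * (u * \<bar>poly (point_poly x) c\<bar> + v * \<bar>poly (point_poly y) c\<bar>)"
    using uv abs_triangle_ineq[of "u * _" "v * _"]
    by (intro mult_left_mono) (simp_all add: abs_mult c_def)
  also have "\<dots> = u * (c * \<bar>poly (point_poly x) c\<bar>) + v * (c * \<bar>poly (point_poly y) c\<bar>)"
    by (simp add: algebra_simps)
  also have "\<dots> \<le> u * x $ h 0 + v * y $ h 0"
    using x y uv by (intro add_mono mult_left_mono) (auto simp: A_def c_def)
  finally show "u *\<^sub>R x + v *\<^sub>R y \<in> A m" by (simp add: A_def c_def)
qed

text \<open>The point with first coordinate \<open>c\<close> whose polynomial is \<open>q\<close> (for \<open>q\<close> of degree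
  below \<open>d\<close> with constant term \<open>1\<close>); all witnesses are of this form.\<close>
definition coeff_point :: "real \<Rightarrow> real poly \<Rightarrow> real ^ 'n" where
  "coeff_point c q = (\<chi> i. if i = h 0 then c else coeff q (inv_into {..<CARD('n)} h i))"

lemma coeff_point_nth: "j < CARD('n) \<Longrightarrow> coeff_point c q $ h j = (if j = 0 then c else coeff q j)"
  using h_eq_iff[of j 0] enum
  by (simp add: coeff_point_def bij_betw_def inv_into_f_f)

lemma point_poly_coeff_point:
  assumes "coeff q 0 = 1" and "degree q < CARD('n)"
  shows "point_poly (coeff_point c q) = q"
proof (rule poly_eqI)
  fix j show "coeff (point_poly (coeff_point c q)) j = coeff q j"
    using assms coeff_eq_0[of q j] by (simp add: coeff_point_poly coeff_point_nth)
qed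

lemma coeff_point_in_A:
  assumes "coeff q 0 = 1" and "degree q < CARD('n)"
  shows "coeff_point c q \<in> A m \<longleftrightarrow> real (Suc m) * \<bar>poly q (real (Suc m))\<bar> \<le> c"
  using assms by (simp add: A_def point_poly_coeff_point coeff_point_nth)

lemma axis_point_in_A: "coeff_point c 1 \<in> A m \<longleftrightarrow> real (Suc m) \<le> c"
  by (simp add: coeff_point_in_A)

lemma inj_A: "inj A"
proof (rule injI)
  fix m m' assume eq: "A m = A m'"
  have "coeff_point c 1 \<in> A m \<longleftrightarrow> coeff_point c 1 \<in> A m'" for c
    by (simp add: eq)
  then have "real (Suc m) \<le> c \<longleftrightarrow> real (Suc m') \<le> c" for c
    by (simp only: axis_point_in_A)
  from this[of "real (Suc m)"] this[of "real (Suc m')"] show "m = m'" by simp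
qed

lemma A_finite_intersection:
  assumes "finite M"
  shows "\<exists>x. \<forall>m\<in>M. x \<in> A m"
proof (intro exI ballI)
  fix m assume "m \<in> M"
  then have "real (Suc m) \<le> (\<Sum>m\<in>M. real (Suc m))"
    using assms by (intro member_le_sum) auto
  then show "coeff_point (\<Sum>m\<in>M. real (Suc m)) 1 \<in> A m"
    by (simp add: axis_point_in_A)
qed

text \<open>Step (2): fewer than \<open>d\<close> members of \<open>A\<close> share a point of norm at most \<open>d 2^d\<close>,
  namely the point whose polynomial vanishes at all the relevant \<open>m + 1\<close>.\<close>
lemma A_small_intersection_bounded:
  assumes "finite M" and "card M < CARD('n)"
  shows "\<exists>x. norm x \<le> real CARD('n) * 2 ^ CARD('n) \<and> (\<forall>m\<in>M. x \<in> A m)"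
proof (intro exI conjI ballI)
  define q where "q = (\<Prod>m\<in>M. [:1, - 1 / real (Suc m):])"
  have q0: "coeff q 0 = 1"
    by (simp add: q_def flip: poly_0_coeff_0 add: poly_prod)
  have "degree q \<le> card M"
    using degree_prod_sum_le[OF assms(1), of "\<lambda>m. [:1, - 1 / real (Suc m):]"]
    by (simp add: q_def)
  then have deg: "degree q < CARD('n)" using assms(2) by simp
  have "\<bar>coeff q j\<bar> \<le> 2 ^ CARD('n)" for j
    using coeff_prod_linear_factors_bound[OF assms(1), of "\<lambda>m. - 1 / real (Suc m)" j] assms(2)
    by (simp add: q_def) (meson less_imp_le_nat one_le_numeral order.trans power_increasing)
  then have "\<bar>coeff_point 0 q $ i\<bar> \<le> 2 ^ CARD('n)" for i
    by (simp add: coeff_point_def)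
  then have "norm (coeff_point 0 q) \<le> (\<Sum>i\<in>(UNIV :: 'n set). 2 ^ CARD('n))"
    by (intro order.trans[OF norm_le_l1_cart] sum_mono)
  then show "norm (coeff_point 0 q) \<le> real CARD('n) * 2 ^ CARD('n)" by simp
  fix m assume "m \<in> M"
  then have "poly q (real (Suc m)) = 0"
    using assms(1) by (auto simp: q_def poly_prod intro!: prod_zero bexI[of _ m])
  then show "coeff_point 0 q \<in> A m" by (simp add: coeff_point_in_A q0 deg)
qed

text \<open>Step (3): since \<open>P_x\<close> is a nonzero polynomial, \<open>t |P_x(t)|\<close> eventually exceeds \<open>x_0\<close>,
  so every point lies in only finitely many members of \<open>A\<close>.\<close>
lemma finite_A_containing: "finite {m. x \<in> A m}"
proof -
  have "point_poly x \<noteq> 0" using coeff_point_poly[of x 0] by auto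
  from poly_infinity[OF this, of "x $ h 0 + 1" 0]
  obtain r where r: "\<And>t::real. r \<le> norm t \<Longrightarrow> x $ h 0 + 1 \<le> norm (poly (pCons 0 (point_poly x)) t)"
    by blast
  have "m < nat \<lceil>r\<rceil>" if "x \<in> A m" for m
  proof (rule ccontr)
    assume "\<not> m < nat \<lceil>r\<rceil>"
    then have "r \<le> real (Suc m)" by linarith
    then have "x $ h 0 + 1 \<le> real (Suc m) * \<bar>poly (point_poly x) (real (Suc m))\<bar>"
      using r[of "real (Suc m)"] by (simp add: abs_mult)
    then show False using that by (simp add: A_def)
  qed
  then show ?thesis by (auto intro: finite_subset[of _ "{..<nat \<lceil>r\<rceil>}"])
qed

lemma pq_property_A_balls:
  defines "R \<equiv> real CARD('n) * 2 ^ CARD('n)"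
  shows "pq_property (CARD('n) + 2 * k) (CARD('n) + k)
           (range A \<union> range (\<lambda>n::nat. cball (0 :: real ^ 'n) (R + real n)))"
proof (rule pq_property_from_intersections)
  show "infinite (range A)" by (rule range_inj_infinite[OF inj_A])
  show "CARD('n) \<ge> 1" by (simp add: Suc_le_eq)
  have subfamily: "\<exists>M. finite M \<and> card M = card A' \<and> A' = A ` M"
    if "A' \<subseteq> range A" "finite A'" for A'
    using finite_subset_image[OF that(2,1)] card_image[OF inj_on_subset[OF inj_A]]
    by (metis subset_UNIV)
  show "\<Inter>A' \<noteq> {}" if "A' \<subseteq> range A" "finite A'" for A'
    using subfamily[OF that] A_finite_intersection by blast
  show "\<Inter>(A' \<union> B') \<noteq> {}"
    if A': "A' \<subseteq> range A" "finite A'" "card A' < CARD('n)"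
      and B': "B' \<subseteq> range (\<lambda>n. cball 0 (R + real n))" for A' B'
  proof -
    obtain M where M: "finite M" "card M < CARD('n)" "A' = A ` M"
      using subfamily[OF A'(1,2)] A'(3) by auto
    then obtain x where "norm x \<le> R" "\<forall>m\<in>M. x \<in> A m"
      using A_small_intersection_bounded unfolding R_def by blast
    then have "x \<in> \<Inter>(A' \<union> B')" using M(3) B' by auto
    then show ?thesis by blast
  qed
qed

end


theorem theorem2p1:
  shows "\<exists>(\<A> :: (real ^ 'n) set set) \<B>.
     infinite \<A> \<and> infinite \<B> \<and>
     (\<forall>X\<in>\<A>. closed X \<and> convex X) \<and>
     (\<forall>X\<in>\<B>. closed X \<and> convex X \<and> bounded X) \<and>
     piercing_number \<A> = \<infinity> \<and>
     (\<forall>k::nat. pq_property (CARD('n) + 2 * k) (CARD('n) + k) (\<A> \<union> \<B>))"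
proof -
  obtain h :: "nat \<Rightarrow> 'n" where "bij_betw h {..<CARD('n)} UNIV"
    using ex_bij_betw_nat_finite[of "UNIV :: 'n set"] by (auto simp: atLeast0LessThan)
  then interpret coordinate_enumeration h by unfold_locales
  define R :: real where "R = real CARD('n) * 2 ^ CARD('n)"
  define B where "B = range (\<lambda>n::nat. cball (0 :: real ^ 'n) (R + real n))"
  have "R \<ge> 0" by (simp add: R_def)
  then have "inj (\<lambda>n::nat. cball (0 :: real ^ 'n) (R + real n))"
    by (intro injI) (simp add: cball_eq_cball_iff)
  then have "infinite B" unfolding B_def by (rule range_inj_infinite)
  moreover have "\<forall>X\<in>B. closed X \<and> convex X \<and> bounded X" by (auto simp: B_def)
  moreover have "pq_property (CARD('n) + 2 * k) (CARD('n) + k) (range A \<union> B)" for k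
    using pq_property_A_balls unfolding B_def R_def .
  ultimately show ?thesis
    using range_inj_infinite[OF inj_A] A_closed A_convex
      piercing_number_infinite[OF finite_A_containing]
    by (intro exI[of _ "range A"] exI[of _ B]) auto
qed

end
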